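(* Let $z^0\in X$, $\gamma\in(0,2)$, $\delta\in[0,1/2)$, and let $\{\sigma_k\},\{\eta_k\}$ be nonnegative with $\sum_k\eta_k<\infty$, $\inf_k\sigma_k>0$; let $z^{k+1}$ be an output of IGPPAstep$(z^k,\sigma_k,\eta_k,\delta,\gamma,M)$ for all $k\ge0$. Assume $T$ satisfies the bounded metric subregularity condition, let $\bar z^0$ be a point of $\Omega$ nearest to $z^0$ in $\|\cdot\|_M$, $r\ge\|\bar z^0\|+\frac{1}{\lambda_{\min}(M)}(\operatorname{dist}_M(z^0,\Omega)+\gamma\sum_k\eta_k)$, and $\kappa_r>0$ with $\operatorname{dist}(z,\Omega)\le\kappa_r\operatorname{dist}(0,T(z))$ for $\|z\|\le r$. Let $\alpha>0$ with $\rho:=\frac{1}{1-\delta}\Big(\sqrt{1-\frac{\min\{\gamma,2\gamma-\gamma^2\}\alpha^2}{\alpha^2+1}}+\delta\big(\frac{\min\{\gamma,1\}}{\sqrt{\alpha^2+1}}+1\big)\Big)<1$ and $C:=\frac{1+\delta}{(1-\delta)(1-\sqrt{1/(\alpha^2+1)})}$. If $\sigma_k\ge\kappa_r\alpha$ for all $k\ge0$, then $\|z^{k+1}-z^k\|_M\le C\rho^k\|z^1-z^0\|_M$ for all $k\ge0$.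
   Context: $X$ is a finite-dimensional real Hilbert space; $T:X\rightrightarrows X$ is maximal monotone with $\Omega:=T^{-1}(0)\neq\emptyset$. $M$ is self-adjoint positive definite with $\lambda_{\max}(M)=1$; $\|z\|_M=\sqrt{\langle z,Mz\rangle}$, $\operatorname{dist}_M(z,D)=\min_{d\in D}\|d-z\|_M$, $\operatorname{dist}=\operatorname{dist}_I$. $\mathcal{J}_{\sigma M^{-1}T}:=(I+\sigma M^{-1}T)^{-1}$. $z^+$ is an output of IGPPAstep$(z,\sigma,\eta,\delta,\gamma,M)$ if $z^+=\gamma w+(1-\gamma)z$ for some $w$ with $\|w-\mathcal{J}_{\sigma M^{-1}T}(z)\|_M\le\min\{\eta,\delta\|w-z\|_M\}$. Bounded metric subregularity: for every $r>0$ there is $\kappa_r>0$ with $\operatorname{dist}(z,\Omega)\le\kappa_r\operatorname{dist}(0,T(z))$ for all $\|z\|\le r$. *)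

theory Defs
  imports "HOL-Analysis.Analysis"
begin

definition monotone_op :: "('a::real_inner \<Rightarrow> 'a set) \<Rightarrow> bool" where
  "monotone_op T \<longleftrightarrow> (\<forall>x y u v. u \<in> T x \<longrightarrow> v \<in> T y \<longrightarrow> 0 \<le> (x - y) \<bullet> (u - v))"

definition maximal_monotone :: "('a::real_inner \<Rightarrow> 'a set) \<Rightarrow> bool" where
  "maximal_monotone T \<longleftrightarrow> monotone_op T \<and>
     (\<forall>S. monotone_op S \<and> (\<forall>x. T x \<subseteq> S x) \<longrightarrow> S = T)"

definition self_adjoint_pd :: "('a::real_inner \<Rightarrow> 'a) \<Rightarrow> bool" where
  "self_adjoint_pd M \<longleftrightarrow> linear M \<and> (\<forall>x y. M x \<bullet> y = x \<bullet> M y) \<and> (\<forall>x. x \<noteq> 0 \<longrightarrow> 0 < x \<bullet> M x)"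

definition lambda_max :: "('a::real_inner \<Rightarrow> 'a) \<Rightarrow> real" where
  "lambda_max M = Sup {x \<bullet> M x | x. norm x = 1}"

definition lambda_min :: "('a::real_inner \<Rightarrow> 'a) \<Rightarrow> real" where
  "lambda_min M = Inf {x \<bullet> M x | x. norm x = 1}"

definition normM :: "('a::real_inner \<Rightarrow> 'a) \<Rightarrow> 'a \<Rightarrow> real" where
  "normM M z = sqrt (z \<bullet> M z)"

definition distM :: "('a::real_inner \<Rightarrow> 'a) \<Rightarrow> 'a \<Rightarrow> 'a set \<Rightarrow> real" where
  "distM M z D = Inf {normM M (d - z) | d. d \<in> D}"

definition zeros :: "('a::real_inner \<Rightarrow> 'a set) \<Rightarrow> 'a set" where
  "zeros T = {z. 0 \<in> T z}"

text \<open>Resolvent (I + \<sigma> M^{-1} T)^{-1} evaluated at z: the point j with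
  z \<in> j + \<sigma> M^{-1} T(j), i.e. M (z - j) \<in> \<sigma> T(j).\<close>
definition resolventM :: "('a::real_inner \<Rightarrow> 'a set) \<Rightarrow> ('a \<Rightarrow> 'a) \<Rightarrow> real \<Rightarrow> 'a \<Rightarrow> 'a" where
  "resolventM T M \<sigma> z = (THE j. \<exists>u \<in> T j. M (z - j) = \<sigma> *\<^sub>R u)"

definition IGPPAstep ::
  "('a::real_inner \<Rightarrow> 'a set) \<Rightarrow> 'a \<Rightarrow> real \<Rightarrow> real \<Rightarrow> real \<Rightarrow> real \<Rightarrow> ('a \<Rightarrow> 'a) \<Rightarrow> 'a \<Rightarrow> bool" where
  "IGPPAstep T z \<sigma> \<eta> \<delta> \<gamma> M zp \<longleftrightarrow>
     (\<exists>w. zp = \<gamma> *\<^sub>R w + (1 - \<gamma>) *\<^sub>R z \<and>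
          normM M (w - resolventM T M \<sigma> z) \<le> min \<eta> (\<delta> * normM M (w - z)))"

definition bounded_metric_subregular :: "('a::real_inner \<Rightarrow> 'a set) \<Rightarrow> bool" where
  "bounded_metric_subregular T \<longleftrightarrow>
     (\<forall>r>0. \<exists>\<kappa>>0. \<forall>z. norm z \<le> r \<longrightarrow> T z \<noteq> {} \<longrightarrow>
         infdist z (zeros T) \<le> \<kappa> * infdist 0 (T z))"

end

theory Submission
  imports Defs
begin

text \<open>
  Let \<open>J\<close> be the exact resolvent of an iterate \<open>z\<close>, \<open>D = dist\<^sub>M(z, \<Omega>)\<close>,
  \<open>a = dist\<^sub>M(J, \<Omega>)\<close> and \<open>t = \<parallel>z - J\<parallel>\<^sub>M\<close>. Firm nonexpansiveness of the resolvent gives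
  \<open>a\<^sup>2 + t\<^sup>2 \<le> D\<^sup>2\<close>. Metric subregularity at \<open>J\<close>, which stays in the ball of radius \<open>r\<close> by
  Fejer monotonicity, gives \<open>\<alpha> a \<le> t\<close>, because \<open>M (z - J) = \<sigma> u\<close> with \<open>u \<in> T J\<close> and
  \<open>\<sigma> \<ge> \<kappa> \<alpha>\<close>. Hence \<open>a \<le> D / sqrt (\<alpha>\<^sup>2 + 1)\<close>, and one exact relaxed step shrinks the
  distance to \<open>\<Omega>\<close> by the factor \<open>sqrt (1 - min \<gamma> (2\<gamma> - \<gamma>\<^sup>2) \<alpha>\<^sup>2 / (\<alpha>\<^sup>2 + 1))\<close>: for
  \<open>\<gamma> \<le> 1\<close> by convexity of \<open>\<Omega>\<close>, for \<open>\<gamma> > 1\<close> by the firm nonexpansiveness inequality at the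
  projection of \<open>J\<close>. The inexactness of the step costs the \<open>\<delta>\<close>-terms of \<open>\<rho>\<close>. Finally
  \<open>\<parallel>z\<^bsup>k+1\<^esup> - z\<^bsup>k\<^esup>\<parallel>\<^sub>M = \<gamma> \<parallel>w\<^bsup>k\<^esup> - z\<^bsup>k\<^esup>\<parallel>\<^sub>M\<close> is bounded above and below by
  multiples of \<open>dist\<^sub>M(z\<^bsup>k\<^esup>, \<Omega>)\<close>, so the linear decay of the distances transfers to the steps.
  The resolvent is well defined by Minty's theorem, which follows from the Debrunner--Flor lemma
  and Brouwer's fixed point theorem.
\<close>

section \<open>The metric induced by \<open>M\<close>\<close>

locale spd_operator =
  fixes M :: "'a::euclidean_space \<Rightarrow> 'a"
  assumes self_adjoint_pd: "self_adjoint_pd M"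
begin

lemma linear_M: "linear M"
  using self_adjoint_pd unfolding self_adjoint_pd_def by blast

lemmas M_add = linear_add[OF linear_M]
  and M_diff = linear_diff[OF linear_M]
  and M_scaleR = linear_scale[OF linear_M]
  and M_0 = linear_0[OF linear_M]

lemma inner_M_commute: "M x \<bullet> y = x \<bullet> M y"
  using self_adjoint_pd unfolding self_adjoint_pd_def by blast

lemma inner_M_swap: "y \<bullet> M x = x \<bullet> M y"
  by (metis inner_M_commute inner_commute)

lemma quad_pos: "x \<noteq> 0 \<Longrightarrow> 0 < x \<bullet> M x"
  using self_adjoint_pd unfolding self_adjoint_pd_def by blast

lemma quad_nonneg: "0 \<le> x \<bullet> M x"
  using quad_pos[of x] by (cases "x = 0") (auto simp: M_0)

lemma continuous_on_M: "continuous_on S M"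
  using linear_M linear_continuous_on linear_conv_bounded_linear by blast

lemma quad_add: "(x + y) \<bullet> M (x + y) = x \<bullet> M x + y \<bullet> M y + 2 * (x \<bullet> M y)"
  by (simp add: M_add inner_add_left inner_add_right inner_M_swap[of y x])

lemma quad_diff: "(x - y) \<bullet> M (x - y) = x \<bullet> M x + y \<bullet> M y - 2 * (x \<bullet> M y)"
  by (simp add: M_diff inner_diff_left inner_diff_right inner_M_swap[of y x])

lemma quad_scaleR: "(c *\<^sub>R x) \<bullet> M (c *\<^sub>R x) = c\<^sup>2 * (x \<bullet> M x)"
  by (simp add: M_scaleR power2_eq_square)

lemma quad_Cauchy_Schwarz: "(x \<bullet> M y)\<^sup>2 \<le> (x \<bullet> M x) * (y \<bullet> M y)"
proof (cases "y = 0")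
  case True
  then show ?thesis by (simp add: M_0)
next
  case False
  then have pos: "0 < y \<bullet> M y" by (rule quad_pos)
  define t where "t = (x \<bullet> M y) / (y \<bullet> M y)"
  have "0 \<le> (x - t *\<^sub>R y) \<bullet> M (x - t *\<^sub>R y)" by (rule quad_nonneg)
  also have "\<dots> = x \<bullet> M x - (x \<bullet> M y)\<^sup>2 / (y \<bullet> M y)"
    using pos by (simp add: quad_diff quad_scaleR M_scaleR t_def field_simps power2_eq_square)
  finally show ?thesis using pos by (simp add: field_simps)
qed

lemma normM_power2: "(normM M x)\<^sup>2 = x \<bullet> M x"
  unfolding normM_def by (simp add: quad_nonneg)

lemma normM_nonneg: "0 \<le> normM M x"
  unfolding normM_def by (simp add: quad_nonneg)

lemma continuous_on_normM: "continuous_on S (\<lambda>x. normM M (x - z))"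
  unfolding normM_def M_diff by (intro continuous_intros continuous_on_M)

lemma inner_M_le_normM: "x \<bullet> M y \<le> normM M x * normM M y"
proof (rule power2_le_imp_le)
  show "(x \<bullet> M y)\<^sup>2 \<le> (normM M x * normM M y)\<^sup>2"
    using quad_Cauchy_Schwarz by (simp add: power_mult_distrib normM_power2)
qed (simp add: normM_nonneg)

lemma normM_triangle_ineq: "normM M (x + y) \<le> normM M x + normM M y"
proof (rule power2_le_imp_le)
  have "(normM M (x + y))\<^sup>2 = (normM M x)\<^sup>2 + (normM M y)\<^sup>2 + 2 * (x \<bullet> M y)"
    by (simp add: normM_power2 quad_add)
  also have "\<dots> \<le> (normM M x + normM M y)\<^sup>2"
    using inner_M_le_normM[of x y] by (simp add: power2_sum)
  finally show "(normM M (x + y))\<^sup>2 \<le> (normM M x + normM M y)\<^sup>2" .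
qed (simp add: normM_nonneg)

lemma normM_scaleR: "normM M (c *\<^sub>R x) = \<bar>c\<bar> * normM M x"
  unfolding normM_def quad_scaleR by (simp add: real_sqrt_mult)

lemma normM_minus_commute: "normM M (x - y) = normM M (y - x)"
  using normM_scaleR[of "-1" "x - y"] by simp

lemma normM_diff_triangle_ineq: "normM M (x - z) \<le> normM M (x - y) + normM M (y - z)"
  using normM_triangle_ineq[of "x - y" "y - z"] by simp

lemma normM_convex_combination_power2:
  "(normM M ((1 - g) *\<^sub>R x + g *\<^sub>R y))\<^sup>2
     = (1 - g) * (normM M x)\<^sup>2 + g * (normM M y)\<^sup>2 - g * (1 - g) * (normM M (x - y))\<^sup>2"
  unfolding normM_power2 quad_add quad_diff quad_scaleR M_scaleR inner_scaleR_left inner_scaleR_right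
  by (simp add: power2_eq_square algebra_simps)
lemma lambda_min_attained:
  obtains x0 where "norm x0 = 1" "lambda_min M = x0 \<bullet> M x0"
    and "\<And>x. norm x = 1 \<Longrightarrow> lambda_min M \<le> x \<bullet> M x"
proof -
  have "continuous_on (sphere 0 1) (\<lambda>x. x \<bullet> M x)"
    by (intro continuous_intros continuous_on_M)
  moreover have "sphere (0::'a) 1 \<noteq> {}" by simp
  ultimately obtain x0 where x0: "x0 \<in> sphere 0 1" "\<forall>x\<in>sphere 0 1. x0 \<bullet> M x0 \<le> x \<bullet> M x"
    using continuous_attains_inf[OF compact_sphere] by blast
  have "lambda_min M = x0 \<bullet> M x0"
    unfolding lambda_min_def by (rule cInf_eq_minimum) (use x0 in auto)
  with x0 show ?thesis using that by auto
qed

lemma lambda_min_pos: "0 < lambda_min M"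
proof -
  obtain x0 where "norm x0 = 1" "lambda_min M = x0 \<bullet> M x0"
    using lambda_min_attained by blast
  moreover have "x0 \<noteq> 0" using \<open>norm x0 = 1\<close> by auto
  ultimately show ?thesis using quad_pos[of x0] by simp
qed

lemma lambda_min_le_quad: "lambda_min M * (norm x)\<^sup>2 \<le> x \<bullet> M x"
proof (cases "x = 0")
  case False
  have "lambda_min M \<le> (x /\<^sub>R norm x) \<bullet> M (x /\<^sub>R norm x)"
    using lambda_min_attained False by (metis norm_sgn sgn_div_norm)
  also have "\<dots> = (x \<bullet> M x) / (norm x)\<^sup>2"
    unfolding quad_scaleR by (simp add: field_simps)
  finally show ?thesis using False by (simp add: field_simps)
qed (simp add: M_0)

lemma sqrt_lambda_min_norm_le_normM: "sqrt (lambda_min M) * norm x \<le> normM M x"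
  unfolding normM_def using lambda_min_le_quad[of x]
  by (metis real_sqrt_le_mono real_sqrt_mult real_sqrt_abs abs_norm_cancel)

lemma quad_le_norm_power2:
  assumes "lambda_max M = 1"
  shows "x \<bullet> M x \<le> (norm x)\<^sup>2"
proof (cases "x = 0")
  case False
  obtain K where K: "\<And>y. norm (M y) \<le> norm y * K"
    using linear_M linear_conv_bounded_linear bounded_linear.bounded by metis
  have "bdd_above {y \<bullet> M y | y. norm y = 1}"
  proof (rule bdd_aboveI)
    fix q assume "q \<in> {y \<bullet> M y | y. norm y = 1}"
    then obtain y where "q = y \<bullet> M y" "norm y = 1" by blast
    then show "q \<le> K" using norm_cauchy_schwarz[of y "M y"] K[of y] by simp
  qed
  moreover have "norm (x /\<^sub>R norm x) = 1" using False by simp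
  ultimately have "(x /\<^sub>R norm x) \<bullet> M (x /\<^sub>R norm x) \<le> lambda_max M"
    unfolding lambda_max_def by (intro cSup_upper) blast+
  then show ?thesis
    using assms False unfolding quad_scaleR by (simp add: field_simps)
qed (simp add: M_0)

lemma normM_le_norm: "lambda_max M = 1 \<Longrightarrow> normM M x \<le> norm x"
  unfolding normM_def by (metis quad_le_norm_power2 real_sqrt_le_mono real_sqrt_abs abs_norm_cancel)

lemma norm_M_le_normM:
  assumes "lambda_max M = 1"
  shows "norm (M x) \<le> normM M x"
proof (cases "M x = 0")
  case False
  have "(norm (M x))\<^sup>2 = x \<bullet> M (M x)"
    by (simp add: inner_M_commute[of x "M x"] power2_norm_eq_inner)
  then have "(norm (M x))\<^sup>2 * (norm (M x))\<^sup>2 = (x \<bullet> M (M x))\<^sup>2"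
    by (simp add: power2_eq_square)
  also have "\<dots> \<le> (x \<bullet> M x) * (M x \<bullet> M (M x))" by (rule quad_Cauchy_Schwarz)
  also have "\<dots> \<le> (x \<bullet> M x) * (norm (M x))\<^sup>2"
    using quad_le_norm_power2[OF assms] quad_nonneg by (intro mult_left_mono)
  finally have "(norm (M x))\<^sup>2 \<le> x \<bullet> M x"
    by (rule mult_right_le_imp_le) (use False in simp)
  then have "(norm (M x))\<^sup>2 \<le> (normM M x)\<^sup>2"
    by (simp add: normM_power2)
  then show ?thesis by (rule power2_le_imp_le) (rule normM_nonneg)
qed (simp add: normM_nonneg)

lemma norm_le_normM_div_lambda_min:
  assumes "lambda_max M = 1"
  shows "norm x \<le> normM M x / lambda_min M"
proof -
  obtain x0 where "norm x0 = 1" "lambda_min M = x0 \<bullet> M x0"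
    using lambda_min_attained by blast
  then have "lambda_min M \<le> 1" using quad_le_norm_power2[OF assms, of x0] by simp
  then have "lambda_min M \<le> sqrt (lambda_min M)"
    using lambda_min_pos by (simp add: real_le_rsqrt power2_eq_square mult_left_le_one_le)
  then have "lambda_min M * norm x \<le> normM M x"
    using sqrt_lambda_min_norm_le_normM[of x] by (meson mult_right_mono norm_ge_zero order_trans)
  then show ?thesis using lambda_min_pos by (simp add: field_simps)
qed

lemma distM_le: "d \<in> D \<Longrightarrow> distM M z D \<le> normM M (d - z)"
  unfolding distM_def by (rule cInf_lower) (auto intro: bdd_belowI[of _ 0] normM_nonneg)

lemma distM_nonneg: "D \<noteq> {} \<Longrightarrow> 0 \<le> distM M z D"
  unfolding distM_def by (rule cInf_greatest) (auto simp: normM_nonneg)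

lemma distM_attained:
  assumes "closed S" "S \<noteq> {}"
  obtains p where "p \<in> S" "distM M z S = normM M (p - z)"
proof -
  obtain d0 where d0: "d0 \<in> S" using assms(2) by blast
  define K where "K = S \<inter> {d. normM M (d - z) \<le> normM M (d0 - z)}"
  have "K \<subseteq> cball z (normM M (d0 - z) / sqrt (lambda_min M))"
  proof
    fix d assume "d \<in> K"
    then have "sqrt (lambda_min M) * norm (d - z) \<le> normM M (d0 - z)"
      using sqrt_lambda_min_norm_le_normM[of "d - z"] unfolding K_def by auto
    then show "d \<in> cball z (normM M (d0 - z) / sqrt (lambda_min M))"
      using lambda_min_pos by (simp add: dist_norm norm_minus_commute field_simps)
  qed
  moreover have "closed K"
    unfolding K_def using assms(1)
    by (intro closed_Int closed_Collect_le continuous_on_normM continuous_on_const)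
  ultimately have "compact K"
    by (meson bounded_cball bounded_subset compact_eq_bounded_closed)
  moreover have "K \<noteq> {}" using d0 unfolding K_def by blast
  ultimately obtain p where p: "p \<in> K" "\<forall>d\<in>K. normM M (p - z) \<le> normM M (d - z)"
    using continuous_attains_inf[OF _ _ continuous_on_normM] by blast
  have "normM M (p - z) \<le> normM M (d - z)" if "d \<in> S" for d
  proof (cases "d \<in> K")
    case False
    then show ?thesis using p(1) that unfolding K_def by auto
  qed (use p in blast)
  then have "distM M z S = normM M (p - z)"
    unfolding distM_def using p(1) unfolding K_def by (intro cInf_eq_minimum) auto
  with p(1) show ?thesis using that unfolding K_def by blast
qed

lemma distM_le_add_normM:
  assumes "closed S" "S \<noteq> {}"
  shows "distM M x S \<le> distM M y S + normM M (x - y)"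
proof -
  obtain p where "p \<in> S" "distM M y S = normM M (p - y)"
    using distM_attained[OF assms] .
  then show ?thesis
    using distM_le[of p S x] normM_diff_triangle_ineq[of p x y] normM_minus_commute[of y x] by simp
qed

lemma distM_convex_combination_le:
  assumes "convex S" "closed S" "S \<noteq> {}" "0 \<le> g" "g \<le> 1"
  shows "distM M ((1 - g) *\<^sub>R x + g *\<^sub>R y) S \<le> (1 - g) * distM M x S + g * distM M y S"
proof -
  obtain p q where p: "p \<in> S" "distM M x S = normM M (p - x)"
    and q: "q \<in> S" "distM M y S = normM M (q - y)"
    using distM_attained[OF assms(2,3)] by metis
  have "(1 - g) *\<^sub>R p + g *\<^sub>R q \<in> S"
    using assms p q by (intro convexD) auto
  moreover have "(1 - g) *\<^sub>R p + g *\<^sub>R q - ((1 - g) *\<^sub>R x + g *\<^sub>R y)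
      = (1 - g) *\<^sub>R (p - x) + g *\<^sub>R (q - y)"
    by (simp add: algebra_simps)
  ultimately have "distM M ((1 - g) *\<^sub>R x + g *\<^sub>R y) S
      \<le> normM M ((1 - g) *\<^sub>R (p - x) + g *\<^sub>R (q - y))"
    using distM_le by metis
  also have "\<dots> \<le> (1 - g) * normM M (p - x) + g * normM M (q - y)"
    using normM_triangle_ineq[of "(1 - g) *\<^sub>R (p - x)" "g *\<^sub>R (q - y)"] assms(4,5)
    by (simp add: normM_scaleR)
  finally show ?thesis using p q by simp
qed

lemma distM_eq_nearest:
  assumes "p \<in> D" "\<And>d. d \<in> D \<Longrightarrow> normM M (p - z) \<le> normM M (d - z)"
  shows "distM M z D = normM M (p - z)"
  unfolding distM_def by (rule cInf_eq_minimum) (use assms in auto)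

end

section \<open>Maximal monotone operators and Minty's theorem\<close>

lemma maximal_monotone_memI:
  assumes max: "maximal_monotone T"
    and mono_with: "\<And>a b. b \<in> T a \<Longrightarrow> 0 \<le> (x - a) \<bullet> (v - b)"
  shows "v \<in> T x"
proof -
  define S where "S y = (if y = x then insert v (T y) else T y)" for y
  have mono_T: "monotone_op T" using max unfolding maximal_monotone_def by blast
  have in_S: "u \<in> S y \<longleftrightarrow> u \<in> T y \<or> (y = x \<and> u = v)" for u y
    unfolding S_def by auto
  have mono_with': "0 \<le> (a - x) \<bullet> (b - v)" if "b \<in> T a" for a b
    using mono_with[OF that] by (metis inner_minus_left inner_minus_right minus_diff_eq)
  have "0 \<le> (y1 - y2) \<bullet> (u1 - u2)" if "u1 \<in> S y1" "u2 \<in> S y2" for y1 y2 u1 u2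
    using that mono_T unfolding in_S monotone_op_def
    by (elim disjE conjE) (simp_all add: mono_with mono_with')
  then have "monotone_op S" unfolding monotone_op_def by blast
  moreover have "T y \<subseteq> S y" for y unfolding S_def by auto
  ultimately have "S = T" using max unfolding maximal_monotone_def by blast
  moreover have "v \<in> S x" unfolding S_def by simp
  ultimately show ?thesis by simp
qed

lemma zeros_eq_Inter_halfspaces:
  assumes "maximal_monotone T"
  shows "zeros T = (\<Inter>(a, b)\<in>{(a, b). b \<in> T a}. {z. b \<bullet> z \<le> b \<bullet> a})"
proof -
  have "0 \<in> T z \<longleftrightarrow> (\<forall>a b. b \<in> T a \<longrightarrow> 0 \<le> (z - a) \<bullet> (0 - b))" for z
    using assms maximal_monotone_memI[OF assms, of z 0]
    unfolding maximal_monotone_def monotone_op_def by force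
  then show ?thesis
    unfolding zeros_def by (auto simp: inner_diff_left inner_diff_right inner_commute)
qed

lemma closed_zeros: "maximal_monotone T \<Longrightarrow> closed (zeros T)"
  by (subst zeros_eq_Inter_halfspaces) (auto intro!: closed_halfspace_le)

lemma convex_zeros: "maximal_monotone T \<Longrightarrow> convex (zeros T)"
  by (subst zeros_eq_Inter_halfspaces) (auto intro!: convex_INT convex_halfspace_le)

lemma double_sum_monotone_nonpos:
  fixes a b :: "'i \<Rightarrow> 'a::real_inner"
  assumes l: "\<And>i. i \<in> I \<Longrightarrow> 0 \<le> l i"
    and mono: "\<And>i j. i \<in> I \<Longrightarrow> j \<in> I \<Longrightarrow> 0 \<le> (a i - a j) \<bullet> (b i - b j)"
  shows "(\<Sum>i\<in>I. \<Sum>j\<in>I. l i * l j * ((a j - a i) \<bullet> b i)) \<le> 0"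
proof -
  define Q where "Q = (\<Sum>i\<in>I. \<Sum>j\<in>I. l i * l j * ((a j - a i) \<bullet> b i))"
  have swapped: "Q = (\<Sum>i\<in>I. \<Sum>j\<in>I. l i * l j * ((a i - a j) \<bullet> b j))"
    unfolding Q_def by (subst sum.swap) (simp add: mult.commute mult.left_commute)
  have "Q + Q = (\<Sum>i\<in>I. \<Sum>j\<in>I. l i * l j * ((a j - a i) \<bullet> b i + (a i - a j) \<bullet> b j))"
    by (subst (2) swapped) (simp add: Q_def sum.distrib[symmetric] distrib_left)
  also have "\<dots> = (\<Sum>i\<in>I. \<Sum>j\<in>I. - (l i * l j * ((a i - a j) \<bullet> (b i - b j))))"
    by (intro sum.cong refl) (simp add: algebra_simps)
  also have "\<dots> \<le> 0"
    using l mono by (intro sum_nonpos) simp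
  finally show ?thesis unfolding Q_def by simp
qed

lemma convex_combination_monotone_nonpos:
  fixes a b :: "'i \<Rightarrow> 'a::real_inner"
  assumes l: "\<And>i. i \<in> I \<Longrightarrow> 0 \<le> l i" "sum l I = 1"
    and mono: "\<And>i j. i \<in> I \<Longrightarrow> j \<in> I \<Longrightarrow> 0 \<le> (a i - a j) \<bullet> (b i - b j)"
  shows "(\<Sum>i\<in>I. l i * (((\<Sum>j\<in>I. l j *\<^sub>R a j) - a i) \<bullet> (b i - y))) \<le> 0"
proof -
  have "(\<Sum>j\<in>I. l j *\<^sub>R a j) - a i = (\<Sum>j\<in>I. l j *\<^sub>R (a j - a i))" for i
    using l(2) by (simp add: scaleR_diff_right sum_subtractf scaleR_sum_left[symmetric])
  then have "(\<Sum>i\<in>I. l i * (((\<Sum>j\<in>I. l j *\<^sub>R a j) - a i) \<bullet> (b i - y)))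
      = (\<Sum>i\<in>I. \<Sum>j\<in>I. l i * l j * ((a j - a i) \<bullet> (b i - y)))"
    by (simp add: inner_sum_left sum_distrib_left mult.assoc)
  also have "\<dots> \<le> 0"
    using double_sum_monotone_nonpos[of I l a "\<lambda>i. b i - y"] l(1) mono by simp
  finally show ?thesis .
qed

lemma partition_of_unity_fixed_point:
  fixes p :: "'g \<Rightarrow> 'a::euclidean_space" and h :: "'g \<Rightarrow> 'a \<Rightarrow> real"
  assumes G: "finite G" "G \<noteq> {}"
    and h: "\<And>g. continuous_on UNIV (h g)" "\<And>g x. 0 \<le> h g x" "\<And>x. 0 < (\<Sum>g\<in>G. h g x)"
  shows "\<exists>x. x = (\<Sum>g\<in>G. (h g x / (\<Sum>g'\<in>G. h g' x)) *\<^sub>R p g)"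
proof -
  define f where "f x = (\<Sum>g\<in>G. (h g x / (\<Sum>g'\<in>G. h g' x)) *\<^sub>R p g)" for x
  define C where "C = convex hull (p ` G)"
  have "continuous_on C f"
    unfolding f_def using h(3)
    by (intro continuous_intros continuous_on_subset[OF h(1)]) (auto simp: less_imp_neq[symmetric])
  moreover have "f \<in> C \<rightarrow> C"
  proof
    fix x
    have "(\<Sum>g\<in>G. h g x / (\<Sum>g'\<in>G. h g' x)) = 1"
      using h(3)[of x] by (simp add: sum_divide_distrib[symmetric])
    then show "f x \<in> C"
      unfolding f_def C_def using G(1) h(2,3)
      by (intro convex_sum) (auto intro: hull_inc divide_nonneg_pos)
  qed
  moreover have "compact C" "convex C" "C \<noteq> {}"
    unfolding C_def using G by (auto simp: finite_imp_compact_convex_hull)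
  ultimately obtain x where "f x = x" using brouwer by metis
  then show ?thesis unfolding f_def by metis
qed

text \<open>If every \<open>x\<close> violated one of the inequalities, the positive parts of the violations
  would form a partition of unity; at a fixed point of the induced map, the weighted sum of the
  violations would be both positive and, by monotonicity of \<open>G\<close>, nonpositive.\<close>

lemma Debrunner_Flor:
  fixes G :: "('a::euclidean_space \<times> 'a) set" and v :: "'a \<Rightarrow> 'a"
  assumes G: "finite G" "G \<noteq> {}"
    and mono: "\<And>g g'. g \<in> G \<Longrightarrow> g' \<in> G \<Longrightarrow> 0 \<le> (fst g - fst g') \<bullet> (snd g - snd g')"
    and cont: "continuous_on UNIV v"
  shows "\<exists>x. \<forall>g\<in>G. 0 \<le> (x - fst g) \<bullet> (v x - snd g)"
proof (rule ccontr)
  assume "\<nexists>x. \<forall>g\<in>G. 0 \<le> (x - fst g) \<bullet> (v x - snd g)"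
  then have violated: "\<exists>g\<in>G. 0 < (x - fst g) \<bullet> (snd g - v x)" for x
    by (fastforce simp: not_le inner_diff_right)
  define h where "h g x = max 0 ((x - fst g) \<bullet> (snd g - v x))" for g x
  have h_nonneg: "0 \<le> h g x" for g x unfolding h_def by simp
  have sum_pos: "0 < (\<Sum>g\<in>G. h g x)" for x
  proof -
    obtain g where "g \<in> G" "0 < h g x" using violated[of x] unfolding h_def by force
    then show ?thesis using G(1) h_nonneg by (intro sum_pos2) auto
  qed
  have "continuous_on UNIV (\<lambda>x. (x - fst g) \<bullet> (snd g - v x))" for g
    by (intro continuous_on_inner continuous_on_diff continuous_on_id continuous_on_const cont)
  then have h_cont: "continuous_on UNIV (h g)" for g
    unfolding h_def by (intro continuous_on_max continuous_on_const)
  obtain x where x: "x = (\<Sum>g\<in>G. (h g x / (\<Sum>g'\<in>G. h g' x)) *\<^sub>R fst g)"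
    using partition_of_unity_fixed_point[OF G h_cont h_nonneg sum_pos, where p = fst] by blast
  define l where "l g = h g x / (\<Sum>g'\<in>G. h g' x)" for g
  have "0 < (\<Sum>g\<in>G. l g * ((x - fst g) \<bullet> (snd g - v x)))"
  proof -
    have summand: "l g * ((x - fst g) \<bullet> (snd g - v x)) = (h g x)\<^sup>2 / (\<Sum>g'\<in>G. h g' x)" for g
      unfolding l_def h_def by (simp add: power2_eq_square max_def)
    obtain g where "g \<in> G" "0 < h g x" using violated[of x] unfolding h_def by force
    then show ?thesis unfolding summand using G(1) sum_pos[of x] by (intro sum_pos2) auto
  qed
  moreover have "(\<Sum>g\<in>G. l g * ((x - fst g) \<bullet> (snd g - v x))) \<le> 0"
  proof -
    have "0 \<le> l g" for g
      unfolding l_def by (intro divide_nonneg_pos h_nonneg sum_pos)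
    moreover have "sum l G = 1"
      using sum_pos[of x] unfolding l_def by (simp add: sum_divide_distrib[symmetric])
    ultimately have "(\<Sum>g\<in>G. l g * (((\<Sum>g'\<in>G. l g' *\<^sub>R fst g') - fst g) \<bullet> (snd g - v x))) \<le> 0"
      using mono by (intro convex_combination_monotone_nonpos)
    moreover have "(\<Sum>g'\<in>G. l g' *\<^sub>R fst g') = x"
      unfolding l_def by (rule x[symmetric])
    ultimately show ?thesis by simp
  qed
  ultimately show False by simp
qed

context spd_operator
begin

lemma Minty_test_set_bounded:
  assumes "0 < \<sigma>"
  shows "{x. 0 \<le> (x - a) \<bullet> ((1 / \<sigma>) *\<^sub>R M (z - x) - b)}
    \<subseteq> cball a (\<sigma> * norm ((1 / \<sigma>) *\<^sub>R M (z - a) - b) / lambda_min M)"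
proof
  fix x assume "x \<in> {x. 0 \<le> (x - a) \<bullet> ((1 / \<sigma>) *\<^sub>R M (z - x) - b)}"
  then have test: "0 \<le> (x - a) \<bullet> ((1 / \<sigma>) *\<^sub>R M (z - x) - b)" by simp
  define y where "y = x - a"
  define c where "c = (1 / \<sigma>) *\<^sub>R M (z - a) - b"
  have "(1 / \<sigma>) *\<^sub>R M (z - x) - b = c - (1 / \<sigma>) *\<^sub>R M y"
    unfolding y_def c_def by (simp add: M_diff algebra_simps)
  with test have "(y \<bullet> M y) / \<sigma> \<le> y \<bullet> c"
    unfolding y_def by (simp add: inner_diff_right)
  then have "y \<bullet> M y \<le> \<sigma> * (y \<bullet> c)"
    using assms by (simp add: field_simps)
  also have "\<dots> \<le> \<sigma> * (norm y * norm c)"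
    using assms norm_cauchy_schwarz[of y c] by (intro mult_left_mono) auto
  finally have "y \<bullet> M y \<le> \<sigma> * (norm y * norm c)" .
  then have "lambda_min M * norm y * norm y \<le> \<sigma> * norm c * norm y"
    using lambda_min_le_quad[of y] by (simp add: power2_eq_square algebra_simps)
  then have "lambda_min M * norm y \<le> \<sigma> * norm c"
    by (cases "y = 0") (use lambda_min_pos assms in auto)
  then have "norm y \<le> \<sigma> * norm c / lambda_min M"
    using lambda_min_pos by (simp add: pos_le_divide_eq mult.commute)
  then show "x \<in> cball a (\<sigma> * norm c / lambda_min M)"
    unfolding y_def mem_cball dist_norm by (metis norm_minus_commute)
qed

text \<open>Minty's theorem, obtained from the Debrunner--Flor lemma by a finite intersection argument.\<close>

lemma resolvent_equation_solvable:
  assumes max: "maximal_monotone T" and b0: "b0 \<in> T a0" and \<sigma>: "0 < \<sigma>"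
  shows "\<exists>j. \<exists>u\<in>T j. M (z - j) = \<sigma> *\<^sub>R u"
proof -
  define v where "v x = (1 / \<sigma>) *\<^sub>R M (z - x)" for x
  have cont: "continuous_on UNIV v"
    unfolding v_def M_diff by (intro continuous_intros continuous_on_M)
  define K where "K g = {x. 0 \<le> (x - fst g) \<bullet> (v x - snd g)}" for g
  have closed_K: "closed (K g)" for g
    unfolding K_def by (intro closed_Collect_le continuous_intros cont)
  have "bounded {x. 0 \<le> (x - a0) \<bullet> ((1 / \<sigma>) *\<^sub>R M (z - x) - b0)}"
    using Minty_test_set_bounded[OF \<sigma>, where a = a0 and b = b0 and z = z]
    by (rule bounded_subset[OF bounded_cball])
  then have "bounded (K (a0, b0))" unfolding K_def v_def by simp
  then have "compact (K (a0, b0))" using closed_K compact_eq_bounded_closed by blast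
  define Gr where "Gr = {g. snd g \<in> T (fst g)}"
  have "K (a0, b0) \<inter> \<Inter> (K ` Gr) \<noteq> {}"
  proof (rule compact_imp_fip[OF \<open>compact (K (a0, b0))\<close>])
    show "\<And>S. S \<in> K ` Gr \<Longrightarrow> closed S" using closed_K by blast
    fix F assume F: "finite F" "F \<subseteq> K ` Gr"
    obtain G where G: "G \<subseteq> Gr" "finite G" "F = K ` G"
      using finite_subset_image[OF F] by blast
    have mono_T: "monotone_op T" using max unfolding maximal_monotone_def by blast
    have graph: "snd g \<in> T (fst g)" if "g \<in> insert (a0, b0) G" for g
      using that b0 G(1) unfolding Gr_def by auto
    have "0 \<le> (fst g - fst g') \<bullet> (snd g - snd g')"
      if "g \<in> insert (a0, b0) G" "g' \<in> insert (a0, b0) G" for g g'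
      using mono_T graph[OF that(1)] graph[OF that(2)] unfolding monotone_op_def by blast
    then obtain x where "\<forall>g\<in>insert (a0, b0) G. 0 \<le> (x - fst g) \<bullet> (v x - snd g)"
      using Debrunner_Flor[OF _ _ _ cont] G(2) by blast
    then show "K (a0, b0) \<inter> \<Inter> F \<noteq> {}" unfolding G(3) K_def by blast
  qed
  then obtain x where x: "\<And>g. g \<in> Gr \<Longrightarrow> x \<in> K g" by blast
  have "v x \<in> T x"
    using x unfolding K_def Gr_def by (intro maximal_monotone_memI[OF max]) auto
  moreover have "M (z - x) = \<sigma> *\<^sub>R v x" using \<sigma> unfolding v_def by simp
  ultimately show ?thesis by blast
qed

lemma resolvent_equation_unique:
  assumes "monotone_op T" "0 \<le> \<sigma>"
    and "u1 \<in> T j1" "M (z - j1) = \<sigma> *\<^sub>R u1" and "u2 \<in> T j2" "M (z - j2) = \<sigma> *\<^sub>R u2"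
  shows "j1 = j2"
proof (rule ccontr)
  assume "j1 \<noteq> j2"
  have "\<sigma> *\<^sub>R (u1 - u2) = M (z - j1) - M (z - j2)"
    using assms(4,6) by (simp add: scaleR_diff_right)
  also have "\<dots> = - M (j1 - j2)" by (simp add: M_diff)
  finally have "\<sigma> * ((j1 - j2) \<bullet> (u1 - u2)) = - ((j1 - j2) \<bullet> M (j1 - j2))"
    by (metis inner_minus_right inner_scaleR_right)
  moreover have "0 \<le> (j1 - j2) \<bullet> (u1 - u2)"
    using assms(1,3,5) unfolding monotone_op_def by blast
  ultimately show False
    using mult_nonneg_nonneg[OF assms(2)] quad_pos[of "j1 - j2"] \<open>j1 \<noteq> j2\<close> by fastforce
qed

lemma resolventM_spec:
  assumes "maximal_monotone T" "b \<in> T a" "0 < \<sigma>"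
  obtains u where "u \<in> T (resolventM T M \<sigma> z)" "M (z - resolventM T M \<sigma> z) = \<sigma> *\<^sub>R u"
proof -
  have "monotone_op T" using assms(1) unfolding maximal_monotone_def by blast
  then have "\<exists>!j. \<exists>u\<in>T j. M (z - j) = \<sigma> *\<^sub>R u"
    using resolvent_equation_solvable[OF assms] resolvent_equation_unique assms(3)
    by (metis less_imp_le)
  then have "\<exists>u\<in>T (resolventM T M \<sigma> z). M (z - resolventM T M \<sigma> z) = \<sigma> *\<^sub>R u"
    unfolding resolventM_def by (rule theI')
  then show ?thesis using that by blast
qed

end

section \<open>The contraction factors\<close>

text \<open>\<open>igppa_rate \<gamma> \<delta> \<alpha>\<close> is the constant \<open>\<rho>\<close> of the statement, and \<open>exact_rate \<gamma> \<alpha>\<close> its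
  value for exact steps (\<open>\<delta> = 0\<close>).\<close>

definition exact_rate :: "real \<Rightarrow> real \<Rightarrow> real" where
  "exact_rate \<gamma> \<alpha> = sqrt (1 - min \<gamma> (2*\<gamma> - \<gamma>^2) * \<alpha>^2 / (\<alpha>^2 + 1))"

definition igppa_rate :: "real \<Rightarrow> real \<Rightarrow> real \<Rightarrow> real" where
  "igppa_rate \<gamma> \<delta> \<alpha> = (1 / (1 - \<delta>)) * (exact_rate \<gamma> \<alpha> + \<delta> * (min \<gamma> 1 / sqrt (\<alpha>^2 + 1) + 1))"

lemma power2_add_1_pos: "0 < (\<alpha>::real)\<^sup>2 + 1"
  by (rule add_nonneg_pos) simp_all

lemma power2_div_power2_add_1_eq: "\<alpha>\<^sup>2 / (\<alpha>\<^sup>2 + 1) = 1 - (sqrt (1 / (\<alpha>\<^sup>2 + 1)))\<^sup>2"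
  using power2_add_1_pos[of \<alpha>] by (simp add: field_simps)

lemma sqrt_inverse_power2_add_1_bounds: "0 \<le> sqrt (1 / (\<alpha>\<^sup>2 + 1))" "sqrt (1 / (\<alpha>\<^sup>2 + 1)) \<le> 1"
  using power2_add_1_pos[of \<alpha>] by simp_all

lemma exact_rate_eq:
  "exact_rate \<gamma> \<alpha> = sqrt (1 - min \<gamma> (2*\<gamma> - \<gamma>\<^sup>2) * (1 - (sqrt (1 / (\<alpha>\<^sup>2 + 1)))\<^sup>2))"
  unfolding exact_rate_def power2_div_power2_add_1_eq[symmetric] by simp

lemma abs_one_minus_le_exact_rate:
  assumes "0 < \<gamma>" "\<gamma> < 2"
  shows "\<bar>1 - \<gamma>\<bar> \<le> exact_rate \<gamma> \<alpha>"
proof -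
  define m where "m = min \<gamma> (2*\<gamma> - \<gamma>\<^sup>2)"
  have m: "0 \<le> m" "m \<le> 1 - (1 - \<gamma>)\<^sup>2"
    using assms unfolding m_def by (auto simp: power2_eq_square algebra_simps)
  have "m * (\<alpha>\<^sup>2 / (\<alpha>\<^sup>2 + 1)) \<le> m"
    using m(1) power2_add_1_pos[of \<alpha>] by (intro mult_left_le) simp_all
  then have "(1 - \<gamma>)\<^sup>2 \<le> 1 - m * \<alpha>\<^sup>2 / (\<alpha>\<^sup>2 + 1)" using m(2) by simp
  then show ?thesis
    unfolding exact_rate_def m_def[symmetric] by (metis real_sqrt_abs real_sqrt_le_mono)
qed

lemma exact_rate_nonneg: "0 < \<gamma> \<Longrightarrow> \<gamma> < 2 \<Longrightarrow> 0 \<le> exact_rate \<gamma> \<alpha>"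
  using abs_one_minus_le_exact_rate by (meson abs_ge_zero order_trans)

lemma igppa_rate_nonneg:
  assumes "0 < \<gamma>" "\<gamma> < 2" "0 \<le> \<delta>" "\<delta> < 1"
  shows "0 \<le> igppa_rate \<gamma> \<delta> \<alpha>"
  unfolding igppa_rate_def using assms exact_rate_nonneg[OF assms(1,2)] by simp

lemma exact_rate_add_inexactness_le:
  assumes "0 < \<gamma>" "\<gamma> < 2" "0 \<le> \<delta>" "\<delta> < 1" "0 \<le> D"
  shows "exact_rate \<gamma> \<alpha> * D + \<gamma> * (\<delta> / (1 - \<delta>) * D) \<le> igppa_rate \<gamma> \<delta> \<alpha> * D"
proof -
  define q where "q = exact_rate \<gamma> \<alpha>"
  define m where "m = min \<gamma> 1 / sqrt (\<alpha>\<^sup>2 + 1)"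
  have "\<gamma> - 1 \<le> q" "0 \<le> m"
    using abs_one_minus_le_exact_rate[OF assms(1,2), of \<alpha>] abs_ge_minus_self[of "1 - \<gamma>"] assms(1)
    unfolding q_def m_def by simp_all
  then have "\<delta> * (\<gamma> - 1 - q - m) \<le> 0"
    using assms(3) by (intro mult_nonneg_nonpos) auto
  then have "(1 - \<delta>) * q + \<gamma> * \<delta> \<le> q + \<delta> * (m + 1)"
    by (simp add: algebra_simps)
  then have "((1 - \<delta>) * q + \<gamma> * \<delta>) / (1 - \<delta>) \<le> (q + \<delta> * (m + 1)) / (1 - \<delta>)"
    using assms(4) by (intro divide_right_mono) auto
  moreover have "((1 - \<delta>) * q + \<gamma> * \<delta>) / (1 - \<delta>) = q + \<gamma> * (\<delta> / (1 - \<delta>))"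
    using assms(4) by (simp add: field_simps)
  ultimately have "q + \<gamma> * (\<delta> / (1 - \<delta>)) \<le> (1 / (1 - \<delta>)) * (q + \<delta> * (m + 1))"
    by simp
  then show ?thesis
    unfolding igppa_rate_def q_def[symmetric] m_def[symmetric]
    using assms(5) by (metis distrib_right mult.assoc mult_right_mono)
qed

lemma convex_rate_le_sqrt:
  fixes g s :: real
  assumes "0 \<le> g" "g \<le> 1" "0 \<le> s" "s \<le> 1"
  shows "(1 - g) + g * s \<le> sqrt (1 - g * (1 - s\<^sup>2))"
proof (rule real_le_rsqrt)
  have "1 - g * (1 - s\<^sup>2) - ((1 - g) + g * s)\<^sup>2 = g * (1 - g) * (1 - s)\<^sup>2"
    by (simp add: power2_eq_square algebra_simps)
  moreover have "0 \<le> g * (1 - g) * (1 - s)\<^sup>2" using assms by simp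
  ultimately show "((1 - g) + g * s)\<^sup>2 \<le> 1 - g * (1 - s\<^sup>2)" by linarith
qed

lemma overrelaxed_rate_le:
  fixes g s a t D :: real
  assumes "1 \<le> g" "g \<le> 2" "0 \<le> a" "a \<le> s * D" "0 \<le> s * D" "a\<^sup>2 + t\<^sup>2 \<le> D\<^sup>2"
  shows "a\<^sup>2 + (g - 1)\<^sup>2 * t\<^sup>2 \<le> (1 - (2*g - g\<^sup>2) * (1 - s\<^sup>2)) * D\<^sup>2"
proof -
  have g: "0 \<le> 1 - (g - 1)\<^sup>2" using assms(1,2) by (simp add: power2_eq_square algebra_simps)
  have "a\<^sup>2 + (g - 1)\<^sup>2 * t\<^sup>2 \<le> (1 - (g - 1)\<^sup>2) * a\<^sup>2 + (g - 1)\<^sup>2 * D\<^sup>2"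
    using assms(6) mult_left_mono[of "t\<^sup>2" "D\<^sup>2 - a\<^sup>2" "(g - 1)\<^sup>2"] by (simp add: algebra_simps)
  also have "\<dots> \<le> (1 - (g - 1)\<^sup>2) * (s * D)\<^sup>2 + (g - 1)\<^sup>2 * D\<^sup>2"
    using assms(3,4) g by (intro add_right_mono mult_left_mono power_mono) auto
  also have "\<dots> = (1 - (2*g - g\<^sup>2) * (1 - s\<^sup>2)) * D\<^sup>2"
    by (simp add: power2_eq_square algebra_simps)
  finally show ?thesis .
qed

lemma geometric_decay:
  fixes d :: "nat \<Rightarrow> real"
  assumes "\<And>k. d (Suc k) \<le> \<rho> * d k" and "0 \<le> \<rho>"
  shows "d k \<le> \<rho> ^ k * d 0"
proof (induction k)
  case (Suc k)
  have "d (Suc k) \<le> \<rho> * d k" by (rule assms(1))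
  also have "\<dots> \<le> \<rho> * (\<rho> ^ k * d 0)" using Suc.IH assms(2) by (rule mult_left_mono)
  finally show ?case by (simp add: mult.assoc)
qed simp

section \<open>One step of the inexact relaxed proximal point method\<close>

locale ppa_setting = spd_operator M for M :: "'a::euclidean_space \<Rightarrow> 'a" +
  fixes T :: "'a \<Rightarrow> 'a set"
  assumes T_maximal_monotone: "maximal_monotone T"
    and zeros_T_nonempty: "zeros T \<noteq> {}"
    and lambda_max_M: "lambda_max M = 1"
begin

lemmas closed_zeros_T = closed_zeros[OF T_maximal_monotone]
  and convex_zeros_T = convex_zeros[OF T_maximal_monotone]

lemma resolventM_exists:
  assumes "0 < \<sigma>"
  obtains u where "u \<in> T (resolventM T M \<sigma> z)" "M (z - resolventM T M \<sigma> z) = \<sigma> *\<^sub>R u"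
  using zeros_T_nonempty resolventM_spec[OF T_maximal_monotone _ assms] unfolding zeros_def by blast

lemma resolvent_firmly_nonexpansive:
  assumes "0 \<le> \<sigma>" "u \<in> T J" "M (z - J) = \<sigma> *\<^sub>R u" "p \<in> zeros T"
  shows "(normM M (J - p))\<^sup>2 + (normM M (z - J))\<^sup>2 \<le> (normM M (z - p))\<^sup>2"
proof -
  have "0 \<le> (J - p) \<bullet> (u - 0)"
    using T_maximal_monotone assms(2,4)
    unfolding maximal_monotone_def monotone_op_def zeros_def by blast
  then have "0 \<le> M (z - J) \<bullet> (J - p)"
    using assms(1,3) by (simp add: inner_commute)
  then have "0 \<le> (z - J) \<bullet> M (J - p)"
    by (simp add: inner_M_commute)
  moreover have "(normM M (z - p))\<^sup>2 = (normM M (z - J))\<^sup>2 + (normM M (J - p))\<^sup>2 + 2 * ((z - J) \<bullet> M (J - p))"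
    using quad_add[of "z - J" "J - p"] by (simp add: normM_power2)
  ultimately show ?thesis by linarith
qed

lemma normM_resolvent_le:
  assumes "0 \<le> \<sigma>" "u \<in> T J" "M (z - J) = \<sigma> *\<^sub>R u" "p \<in> zeros T"
  shows "normM M (J - p) \<le> normM M (z - p)"
  using resolvent_firmly_nonexpansive[OF assms] zero_le_power2[of "normM M (z - J)"]
  by (intro power2_le_imp_le[OF _ normM_nonneg]) linarith

lemma distM_resolvent_power2_le:
  assumes "0 \<le> \<sigma>" "u \<in> T J" "M (z - J) = \<sigma> *\<^sub>R u"
  shows "(distM M J (zeros T))\<^sup>2 + (normM M (z - J))\<^sup>2 \<le> (distM M z (zeros T))\<^sup>2"
proof -
  obtain p where p: "p \<in> zeros T" "distM M z (zeros T) = normM M (p - z)"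
    using distM_attained[OF closed_zeros_T zeros_T_nonempty] .
  have "distM M J (zeros T) \<le> normM M (J - p)"
    using distM_le[OF p(1)] normM_minus_commute by metis
  then have "(distM M J (zeros T))\<^sup>2 \<le> (normM M (J - p))\<^sup>2"
    using distM_nonneg[OF zeros_T_nonempty] by (intro power_mono)
  then show ?thesis
    using resolvent_firmly_nonexpansive[OF assms p(1)] p(2) normM_minus_commute[of z p] by simp
qed

lemma normM_resolvent_step_le_distM:
  assumes "0 \<le> \<sigma>" "u \<in> T J" "M (z - J) = \<sigma> *\<^sub>R u"
  shows "normM M (z - J) \<le> distM M z (zeros T)"
  using distM_resolvent_power2_le[OF assms] zero_le_power2[of "distM M J (zeros T)"]
  by (intro power2_le_imp_le[OF _ distM_nonneg[OF zeros_T_nonempty]]) linarith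

lemma relaxed_resolvent_normM_le:
  assumes "0 \<le> \<sigma>" "u \<in> T J" "M (z - J) = \<sigma> *\<^sub>R u" "p \<in> zeros T" "0 \<le> \<gamma>" "\<gamma> \<le> 2"
  shows "normM M ((1 - \<gamma>) *\<^sub>R z + \<gamma> *\<^sub>R J - p) \<le> normM M (z - p)"
proof (rule power2_le_imp_le)
  have "(1 - \<gamma>) *\<^sub>R z + \<gamma> *\<^sub>R J - p = (1 - \<gamma>) *\<^sub>R (z - p) + \<gamma> *\<^sub>R (J - p)"
    by (simp add: algebra_simps)
  then have "(normM M ((1 - \<gamma>) *\<^sub>R z + \<gamma> *\<^sub>R J - p))\<^sup>2
      = (1 - \<gamma>) * (normM M (z - p))\<^sup>2 + \<gamma> * (normM M (J - p))\<^sup>2 - \<gamma> * (1 - \<gamma>) * (normM M (z - J))\<^sup>2"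
    by (simp add: normM_convex_combination_power2)
  also have "\<dots> \<le> (1 - \<gamma>) * (normM M (z - p))\<^sup>2 + \<gamma> * ((normM M (z - p))\<^sup>2 - (normM M (z - J))\<^sup>2)
      - \<gamma> * (1 - \<gamma>) * (normM M (z - J))\<^sup>2"
    using resolvent_firmly_nonexpansive[OF assms(1-4)] assms(5) by (simp add: mult_left_mono)
  also have "\<dots> = (normM M (z - p))\<^sup>2 - \<gamma> * (2 - \<gamma>) * (normM M (z - J))\<^sup>2"
    by (simp add: algebra_simps)
  also have "\<dots> \<le> (normM M (z - p))\<^sup>2"
    using assms(5,6) by simp
  finally show "(normM M ((1 - \<gamma>) *\<^sub>R z + \<gamma> *\<^sub>R J - p))\<^sup>2 \<le> (normM M (z - p))\<^sup>2" .
qed (rule normM_nonneg)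

lemma subregularity_at_resolventM:
  assumes "0 < \<sigma>" "0 \<le> \<kappa>" "0 \<le> \<alpha>" "\<kappa> * \<alpha> \<le> \<sigma>"
    and subreg: "\<forall>x. norm x \<le> r \<longrightarrow> T x \<noteq> {} \<longrightarrow> infdist x (zeros T) \<le> \<kappa> * infdist 0 (T x)"
    and "norm (resolventM T M \<sigma> z) \<le> r"
  shows "\<alpha> * distM M (resolventM T M \<sigma> z) (zeros T) \<le> normM M (z - resolventM T M \<sigma> z)"
proof -
  define J where "J = resolventM T M \<sigma> z"
  obtain u where u: "u \<in> T J" "M (z - J) = \<sigma> *\<^sub>R u"
    using resolventM_exists[OF assms(1)] unfolding J_def .
  obtain q where q: "q \<in> zeros T" "infdist J (zeros T) = dist J q"
    using infdist_attains_inf[OF closed_zeros_T zeros_T_nonempty] by blast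
  have "distM M J (zeros T) \<le> normM M (q - J)" by (rule distM_le[OF q(1)])
  also have "\<dots> \<le> norm (q - J)" by (rule normM_le_norm[OF lambda_max_M])
  also have "\<dots> = infdist J (zeros T)" using q(2) by (simp add: dist_norm norm_minus_commute)
  also have "\<dots> \<le> \<kappa> * infdist 0 (T J)" using subreg assms(6) u(1) unfolding J_def by blast
  also have "\<dots> \<le> \<kappa> * norm u"
    using infdist_le[OF u(1), of 0] assms(2) by (simp add: mult_left_mono)
  finally have "\<alpha> * distM M J (zeros T) \<le> (\<kappa> * \<alpha>) * norm u"
    using assms(3) by (simp add: mult_left_mono mult.commute mult.left_commute)
  also have "\<dots> \<le> \<sigma> * norm u" using assms(4) by (simp add: mult_right_mono)
  also have "\<dots> = norm (M (z - J))" using u(2) assms(1) by simp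
  also have "\<dots> \<le> normM M (z - J)" by (rule norm_M_le_normM[OF lambda_max_M])
  finally show ?thesis unfolding J_def .
qed

lemma distM_resolvent_le:
  assumes "0 \<le> \<sigma>" "u \<in> T J" "M (z - J) = \<sigma> *\<^sub>R u" "0 \<le> \<alpha>"
    and subreg: "\<alpha> * distM M J (zeros T) \<le> normM M (z - J)"
  shows "distM M J (zeros T) \<le> sqrt (1 / (\<alpha>\<^sup>2 + 1)) * distM M z (zeros T)"
proof (rule power2_le_imp_le)
  define a where "a = distM M J (zeros T)"
  define D where "D = distM M z (zeros T)"
  have "\<alpha>\<^sup>2 * a\<^sup>2 \<le> (normM M (z - J))\<^sup>2"
    using subreg assms(4) distM_nonneg[OF zeros_T_nonempty] unfolding a_def
    by (metis power_mono power_mult_distrib mult_nonneg_nonneg)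
  then have "(\<alpha>\<^sup>2 + 1) * a\<^sup>2 \<le> D\<^sup>2"
    using distM_resolvent_power2_le[OF assms(1-3)] unfolding a_def D_def by (simp add: algebra_simps)
  then have "a\<^sup>2 \<le> D\<^sup>2 / (\<alpha>\<^sup>2 + 1)"
    using power2_add_1_pos[of \<alpha>] by (simp add: field_simps)
  then show "(distM M J (zeros T))\<^sup>2 \<le> (sqrt (1 / (\<alpha>\<^sup>2 + 1)) * distM M z (zeros T))\<^sup>2"
    unfolding a_def D_def using power2_add_1_pos[of \<alpha>] by (simp add: power_mult_distrib)
qed (simp add: distM_nonneg[OF zeros_T_nonempty])

lemma distM_le_resolvent_step:
  assumes "0 \<le> \<sigma>" "u \<in> T J" "M (z - J) = \<sigma> *\<^sub>R u" "0 \<le> \<alpha>"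
    and "\<alpha> * distM M J (zeros T) \<le> normM M (z - J)"
  shows "(1 - sqrt (1 / (\<alpha>\<^sup>2 + 1))) * distM M z (zeros T) \<le> normM M (z - J)"
  using distM_le_add_normM[OF closed_zeros_T zeros_T_nonempty, of z J] distM_resolvent_le[OF assms]
  by (simp add: algebra_simps)

lemma distM_overrelaxed_power2_le:
  assumes "0 \<le> \<sigma>" "u \<in> T J" "M (z - J) = \<sigma> *\<^sub>R u" "1 \<le> \<gamma>"
  shows "(distM M ((1 - \<gamma>) *\<^sub>R z + \<gamma> *\<^sub>R J) (zeros T))\<^sup>2
    \<le> (distM M J (zeros T))\<^sup>2 + (\<gamma> - 1)\<^sup>2 * (normM M (z - J))\<^sup>2"
proof -
  define x where "x = (1 - \<gamma>) *\<^sub>R z + \<gamma> *\<^sub>R J"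
  obtain p where p: "p \<in> zeros T" "distM M J (zeros T) = normM M (p - J)"
    using distM_attained[OF closed_zeros_T zeros_T_nonempty] .
  have a: "normM M (J - p) = distM M J (zeros T)" using p(2) normM_minus_commute by metis
  have "x - p = (1 - \<gamma>) *\<^sub>R (z - p) + \<gamma> *\<^sub>R (J - p)" unfolding x_def by (simp add: algebra_simps)
  then have "(normM M (x - p))\<^sup>2
      = (1 - \<gamma>) * (normM M (z - p))\<^sup>2 + \<gamma> * (normM M (J - p))\<^sup>2 - \<gamma> * (1 - \<gamma>) * (normM M (z - J))\<^sup>2"
    by (simp add: normM_convex_combination_power2)
  also have "\<dots> \<le> (1 - \<gamma>) * ((normM M (J - p))\<^sup>2 + (normM M (z - J))\<^sup>2)
      + \<gamma> * (normM M (J - p))\<^sup>2 - \<gamma> * (1 - \<gamma>) * (normM M (z - J))\<^sup>2"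
    using resolvent_firmly_nonexpansive[OF assms(1-3) p(1)] assms(4) by (simp add: mult_left_mono_neg)
  also have "\<dots> = (distM M J (zeros T))\<^sup>2 + (\<gamma> - 1)\<^sup>2 * (normM M (z - J))\<^sup>2"
    unfolding a by (simp add: power2_eq_square algebra_simps)
  finally have "(normM M (x - p))\<^sup>2 \<le> \<dots>" .
  moreover have "distM M x (zeros T) \<le> normM M (x - p)"
    using distM_le[OF p(1)] normM_minus_commute by metis
  ultimately show ?thesis
    unfolding x_def[symmetric]
    using distM_nonneg[OF zeros_T_nonempty] by (meson order_trans power_mono)
qed

lemma distM_underrelaxed_step_le:
  assumes "0 \<le> \<sigma>" "u \<in> T J" "M (z - J) = \<sigma> *\<^sub>R u" "0 < \<gamma>" "\<gamma> \<le> 1" "0 \<le> \<alpha>"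
    and subreg: "\<alpha> * distM M J (zeros T) \<le> normM M (z - J)"
  shows "distM M ((1 - \<gamma>) *\<^sub>R z + \<gamma> *\<^sub>R J) (zeros T) \<le> exact_rate \<gamma> \<alpha> * distM M z (zeros T)"
proof -
  define s where "s = sqrt (1 / (\<alpha>\<^sup>2 + 1))"
  define D where "D = distM M z (zeros T)"
  have s: "0 \<le> s" "s \<le> 1" unfolding s_def by (rule sqrt_inverse_power2_add_1_bounds)+
  have D: "0 \<le> D" unfolding D_def by (rule distM_nonneg[OF zeros_T_nonempty])
  have "distM M ((1 - \<gamma>) *\<^sub>R z + \<gamma> *\<^sub>R J) (zeros T) \<le> (1 - \<gamma>) * D + \<gamma> * distM M J (zeros T)"
    unfolding D_def using assms(4,5)
    by (intro distM_convex_combination_le convex_zeros_T closed_zeros_T zeros_T_nonempty) auto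
  also have "\<dots> \<le> ((1 - \<gamma>) + \<gamma> * s) * D"
    using distM_resolvent_le[OF assms(1-3,6) subreg] assms(4)
    unfolding D_def s_def by (simp add: algebra_simps mult_left_mono)
  also have "\<dots> \<le> sqrt (1 - \<gamma> * (1 - s\<^sup>2)) * D"
    using convex_rate_le_sqrt[of \<gamma> s] assms(4,5) s D by (intro mult_right_mono) auto
  also have "min \<gamma> (2*\<gamma> - \<gamma>\<^sup>2) = \<gamma>"
    using assms(4,5) by (simp add: power2_eq_square min_def mult_left_le)
  then have "sqrt (1 - \<gamma> * (1 - s\<^sup>2)) = exact_rate \<gamma> \<alpha>"
    unfolding exact_rate_eq s_def by simp
  finally show ?thesis unfolding D_def .
qed

lemma distM_overrelaxed_step_le:
  assumes "0 \<le> \<sigma>" "u \<in> T J" "M (z - J) = \<sigma> *\<^sub>R u" "1 < \<gamma>" "\<gamma> < 2" "0 \<le> \<alpha>"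
    and subreg: "\<alpha> * distM M J (zeros T) \<le> normM M (z - J)"
  shows "distM M ((1 - \<gamma>) *\<^sub>R z + \<gamma> *\<^sub>R J) (zeros T) \<le> exact_rate \<gamma> \<alpha> * distM M z (zeros T)"
proof (rule power2_le_imp_le)
  define s where "s = sqrt (1 / (\<alpha>\<^sup>2 + 1))"
  define D where "D = distM M z (zeros T)"
  define a where "a = distM M J (zeros T)"
  have D: "0 \<le> D" and a: "0 \<le> a" "a \<le> s * D"
    unfolding D_def a_def s_def
    using distM_nonneg[OF zeros_T_nonempty] distM_resolvent_le[OF assms(1-3,6) subreg] by auto
  have "min \<gamma> (2*\<gamma> - \<gamma>\<^sup>2) = 2*\<gamma> - \<gamma>\<^sup>2"
    using assms(4) by (simp add: power2_eq_square min_def)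
  then have rate: "(exact_rate \<gamma> \<alpha> * D)\<^sup>2 = (1 - (2*\<gamma> - \<gamma>\<^sup>2) * (1 - s\<^sup>2)) * D\<^sup>2"
    using exact_rate_nonneg[of \<gamma> \<alpha>] assms(4,5) unfolding exact_rate_eq s_def
    by (simp add: power_mult_distrib)
  have "(distM M ((1 - \<gamma>) *\<^sub>R z + \<gamma> *\<^sub>R J) (zeros T))\<^sup>2 \<le> a\<^sup>2 + (\<gamma> - 1)\<^sup>2 * (normM M (z - J))\<^sup>2"
    unfolding a_def using assms(4) by (intro distM_overrelaxed_power2_le[OF assms(1-3)]) simp
  also have "\<dots> \<le> (exact_rate \<gamma> \<alpha> * D)\<^sup>2"
    unfolding rate using a D assms(4,5) sqrt_inverse_power2_add_1_bounds[of \<alpha>]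
      distM_resolvent_power2_le[OF assms(1-3)]
    unfolding a_def D_def s_def by (intro overrelaxed_rate_le) auto
  finally show "(distM M ((1 - \<gamma>) *\<^sub>R z + \<gamma> *\<^sub>R J) (zeros T))\<^sup>2 \<le> (exact_rate \<gamma> \<alpha> * D)\<^sup>2" .
  show "0 \<le> exact_rate \<gamma> \<alpha> * D"
    using exact_rate_nonneg[of \<gamma> \<alpha>] assms(4,5) D by simp
qed

lemma distM_exact_relaxed_step_le:
  assumes "0 \<le> \<sigma>" "u \<in> T J" "M (z - J) = \<sigma> *\<^sub>R u" "0 < \<gamma>" "\<gamma> < 2" "0 \<le> \<alpha>"
    and "\<alpha> * distM M J (zeros T) \<le> normM M (z - J)"
  shows "distM M ((1 - \<gamma>) *\<^sub>R z + \<gamma> *\<^sub>R J) (zeros T) \<le> exact_rate \<gamma> \<alpha> * distM M z (zeros T)"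
  using distM_underrelaxed_step_le[OF assms(1-4) _ assms(6,7)]
    distM_overrelaxed_step_le[OF assms(1-3) _ assms(5-7)]
  by (cases "\<gamma> \<le> 1") auto

lemma IGPPAstepE:
  assumes "IGPPAstep T z \<sigma> \<eta> \<delta> \<gamma> M zp" "0 < \<sigma>"
  obtains w u where "zp = \<gamma> *\<^sub>R w + (1 - \<gamma>) *\<^sub>R z"
    and "normM M (w - resolventM T M \<sigma> z) \<le> \<eta>"
    and "normM M (w - resolventM T M \<sigma> z) \<le> \<delta> * normM M (w - z)"
    and "u \<in> T (resolventM T M \<sigma> z)" "M (z - resolventM T M \<sigma> z) = \<sigma> *\<^sub>R u"
proof -
  obtain u where "u \<in> T (resolventM T M \<sigma> z)" "M (z - resolventM T M \<sigma> z) = \<sigma> *\<^sub>R u"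
    using resolventM_exists[OF assms(2)] .
  moreover obtain w where "zp = \<gamma> *\<^sub>R w + (1 - \<gamma>) *\<^sub>R z"
    "normM M (w - resolventM T M \<sigma> z) \<le> min \<eta> (\<delta> * normM M (w - z))"
    using assms(1) unfolding IGPPAstep_def by blast
  ultimately show ?thesis using that[of w u] by simp
qed

lemma inexact_point_normM_le_distM:
  assumes "0 \<le> \<sigma>" "u \<in> T J" "M (z - J) = \<sigma> *\<^sub>R u"
    and "normM M (w - J) \<le> \<delta> * normM M (w - z)"
  shows "(1 - \<delta>) * normM M (w - z) \<le> distM M z (zeros T)"
  using normM_diff_triangle_ineq[of w z J] normM_minus_commute[of J z] assms(4)
    normM_resolvent_step_le_distM[OF assms(1-3)]
  by (simp add: algebra_simps)

lemma IGPPAstep_normM_le: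
  assumes "IGPPAstep T z \<sigma> \<eta> \<delta> \<gamma> M zp" "0 < \<sigma>" "0 \<le> \<gamma>" "\<gamma> \<le> 2" "p \<in> zeros T"
  shows "normM M (zp - p) \<le> normM M (z - p) + \<gamma> * \<eta>"
proof -
  define J where "J = resolventM T M \<sigma> z"
  obtain w u where w: "zp = \<gamma> *\<^sub>R w + (1 - \<gamma>) *\<^sub>R z" "normM M (w - J) \<le> \<eta>"
    and u: "u \<in> T J" "M (z - J) = \<sigma> *\<^sub>R u"
    using IGPPAstepE[OF assms(1,2)] unfolding J_def by metis
  have "zp - p = ((1 - \<gamma>) *\<^sub>R z + \<gamma> *\<^sub>R J - p) + \<gamma> *\<^sub>R (w - J)"
    unfolding w(1) by (simp add: algebra_simps)
  then have "normM M (zp - p) \<le> normM M ((1 - \<gamma>) *\<^sub>R z + \<gamma> *\<^sub>R J - p) + normM M (\<gamma> *\<^sub>R (w - J))"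
    by (metis normM_triangle_ineq)
  also have "\<dots> = normM M ((1 - \<gamma>) *\<^sub>R z + \<gamma> *\<^sub>R J - p) + \<gamma> * normM M (w - J)"
    using assms(3) by (simp add: normM_scaleR)
  also have "\<dots> \<le> normM M (z - p) + \<gamma> * \<eta>"
    using relaxed_resolvent_normM_le[OF _ u assms(5,3,4)] assms(2,3) w(2)
    by (intro add_mono mult_left_mono) auto
  finally show ?thesis .
qed

lemma IGPPAstep_normM_step_le_distM:
  assumes "IGPPAstep T z \<sigma> \<eta> \<delta> \<gamma> M zp" "0 < \<sigma>" "0 \<le> \<gamma>"
  shows "(1 - \<delta>) * normM M (zp - z) \<le> \<gamma> * distM M z (zeros T)"
proof -
  define J where "J = resolventM T M \<sigma> z"
  obtain w u where w: "zp = \<gamma> *\<^sub>R w + (1 - \<gamma>) *\<^sub>R z" "normM M (w - J) \<le> \<delta> * normM M (w - z)"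
    and u: "u \<in> T J" "M (z - J) = \<sigma> *\<^sub>R u"
    using IGPPAstepE[OF assms(1,2)] unfolding J_def by metis
  have "zp - z = \<gamma> *\<^sub>R (w - z)" unfolding w(1) by (simp add: algebra_simps)
  then have "(1 - \<delta>) * normM M (zp - z) = \<gamma> * ((1 - \<delta>) * normM M (w - z))"
    using assms(3) by (simp add: normM_scaleR)
  also have "\<dots> \<le> \<gamma> * distM M z (zeros T)"
    using inexact_point_normM_le_distM[OF _ u w(2)] assms(2,3) by (intro mult_left_mono) auto
  finally show ?thesis .
qed

lemma IGPPAstep_distM_le_normM_step:
  assumes "IGPPAstep T z \<sigma> \<eta> \<delta> \<gamma> M zp" "0 < \<sigma>" "0 \<le> \<gamma>" "0 \<le> \<alpha>"
    and "\<alpha> * distM M (resolventM T M \<sigma> z) (zeros T) \<le> normM M (z - resolventM T M \<sigma> z)"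
  shows "\<gamma> * (1 - sqrt (1 / (\<alpha>\<^sup>2 + 1))) * distM M z (zeros T) \<le> (1 + \<delta>) * normM M (zp - z)"
proof -
  define J where "J = resolventM T M \<sigma> z"
  obtain w u where w: "zp = \<gamma> *\<^sub>R w + (1 - \<gamma>) *\<^sub>R z" "normM M (w - J) \<le> \<delta> * normM M (w - z)"
    and u: "u \<in> T J" "M (z - J) = \<sigma> *\<^sub>R u"
    using IGPPAstepE[OF assms(1,2)] unfolding J_def by metis
  have "(1 - sqrt (1 / (\<alpha>\<^sup>2 + 1))) * distM M z (zeros T) \<le> normM M (z - J)"
    using distM_le_resolvent_step[OF _ u assms(4)] assms(2,5) unfolding J_def by simp
  also have "\<dots> \<le> (1 + \<delta>) * normM M (w - z)"
    using normM_diff_triangle_ineq[of z J w] normM_minus_commute[of z w] w(2)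
    by (simp add: algebra_simps)
  finally have "\<gamma> * ((1 - sqrt (1 / (\<alpha>\<^sup>2 + 1))) * distM M z (zeros T)) \<le> (1 + \<delta>) * (\<gamma> * normM M (w - z))"
    using assms(3) by (simp add: mult_left_mono mult.left_commute)
  moreover have "zp - z = \<gamma> *\<^sub>R (w - z)" unfolding w(1) by (simp add: algebra_simps)
  ultimately show ?thesis using assms(3) by (simp add: normM_scaleR mult.assoc)
qed

lemma IGPPAstep_distM_contraction:
  assumes "IGPPAstep T z \<sigma> \<eta> \<delta> \<gamma> M zp" "0 < \<sigma>" "0 < \<gamma>" "\<gamma> < 2" "0 \<le> \<delta>" "\<delta> < 1" "0 \<le> \<alpha>"
    and subreg: "\<alpha> * distM M (resolventM T M \<sigma> z) (zeros T) \<le> normM M (z - resolventM T M \<sigma> z)"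
  shows "distM M zp (zeros T) \<le> igppa_rate \<gamma> \<delta> \<alpha> * distM M z (zeros T)"
proof -
  define J where "J = resolventM T M \<sigma> z"
  define D where "D = distM M z (zeros T)"
  define x where "x = (1 - \<gamma>) *\<^sub>R z + \<gamma> *\<^sub>R J"
  obtain w u where w: "zp = \<gamma> *\<^sub>R w + (1 - \<gamma>) *\<^sub>R z" "normM M (w - J) \<le> \<delta> * normM M (w - z)"
    and u: "u \<in> T J" "M (z - J) = \<sigma> *\<^sub>R u"
    using IGPPAstepE[OF assms(1,2)] unfolding J_def by metis
  have "zp - x = \<gamma> *\<^sub>R (w - J)" unfolding w(1) x_def by (simp add: algebra_simps)
  then have "distM M zp (zeros T) \<le> distM M x (zeros T) + \<gamma> * normM M (w - J)"
    using distM_le_add_normM[OF closed_zeros_T zeros_T_nonempty, of zp x] assms(3)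
    by (simp add: normM_scaleR)
  moreover have "distM M x (zeros T) \<le> exact_rate \<gamma> \<alpha> * D"
    unfolding x_def D_def using assms(2-4,7) subreg unfolding J_def
    by (intro distM_exact_relaxed_step_le[OF _ u[unfolded J_def]]) auto
  moreover have "normM M (w - J) \<le> \<delta> / (1 - \<delta>) * D"
  proof -
    have "(1 - \<delta>) * normM M (w - z) \<le> D"
      unfolding D_def using inexact_point_normM_le_distM[OF _ u w(2)] assms(2) by simp
    then have "normM M (w - z) \<le> D / (1 - \<delta>)"
      using assms(6) by (simp add: pos_le_divide_eq mult.commute)
    then have "\<delta> * normM M (w - z) \<le> \<delta> * (D / (1 - \<delta>))"
      using assms(5) by (rule mult_left_mono)
    then show ?thesis using w(2) by simp
  qed
  then have "\<gamma> * normM M (w - J) \<le> \<gamma> * (\<delta> / (1 - \<delta>) * D)"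
    using assms(3) by (intro mult_left_mono) auto
  moreover have "exact_rate \<gamma> \<alpha> * D + \<gamma> * (\<delta> / (1 - \<delta>) * D) \<le> igppa_rate \<gamma> \<delta> \<alpha> * D"
    unfolding D_def by (intro exact_rate_add_inexactness_le assms(3-6) distM_nonneg zeros_T_nonempty)
  ultimately show ?thesis unfolding D_def by linarith
qed

lemma IGPPA_normM_le_Fejer:
  assumes steps: "\<forall>k. IGPPAstep T (z k) (\<sigma> k) (\<eta> k) \<delta> \<gamma> M (z (Suc k))"
    and "\<And>k. 0 < \<sigma> k" "0 \<le> \<gamma>" "\<gamma> \<le> 2" "p \<in> zeros T"
  shows "normM M (z k - p) \<le> normM M (z 0 - p) + \<gamma> * (\<Sum>i<k. \<eta> i)"
proof (induction k)
  case (Suc k)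
  then show ?case
    using IGPPAstep_normM_le[OF steps[rule_format, of k] assms(2-5)] by (simp add: algebra_simps)
qed simp

lemma IGPPA_resolvents_bounded:
  assumes steps: "\<forall>k. IGPPAstep T (z k) (\<sigma> k) (\<eta> k) \<delta> \<gamma> M (z (Suc k))"
    and \<sigma>: "\<And>k. 0 < \<sigma> k" and \<gamma>: "0 \<le> \<gamma>" "\<gamma> \<le> 2"
    and \<eta>: "\<And>k. 0 \<le> \<eta> k" "summable \<eta>"
    and p: "p \<in> zeros T" "\<forall>d\<in>zeros T. normM M (p - z 0) \<le> normM M (d - z 0)"
    and r: "norm p + (1 / lambda_min M) * (distM M (z 0) (zeros T) + \<gamma> * (\<Sum>k. \<eta> k)) \<le> r"
  shows "norm (resolventM T M (\<sigma> k) (z k)) \<le> r"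
proof -
  define J where "J = resolventM T M (\<sigma> k) (z k)"
  obtain u where u: "u \<in> T J" "M (z k - J) = \<sigma> k *\<^sub>R u"
    using resolventM_exists[OF \<sigma>] unfolding J_def .
  have "normM M (J - p) \<le> normM M (z k - p)"
    using normM_resolvent_le[OF _ u p(1)] \<sigma>[of k] by simp
  also have "\<dots> \<le> normM M (z 0 - p) + \<gamma> * (\<Sum>i<k. \<eta> i)"
    by (rule IGPPA_normM_le_Fejer[OF steps \<sigma> \<gamma> p(1)])
  also have "\<dots> \<le> distM M (z 0) (zeros T) + \<gamma> * (\<Sum>k. \<eta> k)"
  proof -
    have "distM M (z 0) (zeros T) = normM M (z 0 - p)"
      using distM_eq_nearest[of p "zeros T" "z 0"] p normM_minus_commute by metis
    moreover have "(\<Sum>i<k. \<eta> i) \<le> (\<Sum>k. \<eta> k)" using \<eta> by (intro sum_le_suminf) auto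
    ultimately show ?thesis using \<gamma>(1) by (simp add: mult_left_mono)
  qed
  finally have "norm (J - p) \<le> (distM M (z 0) (zeros T) + \<gamma> * (\<Sum>k. \<eta> k)) / lambda_min M"
    using norm_le_normM_div_lambda_min[OF lambda_max_M, of "J - p"] lambda_min_pos
    by (meson divide_right_mono less_imp_le order_trans)
  then show ?thesis
    using norm_triangle_sub[of J p] r unfolding J_def by simp
qed

end

context ppa_setting
begin

lemma IGPPA_linear_convergence:
  assumes steps: "\<forall>k. IGPPAstep T (z k) (\<sigma> k) (\<eta> k) \<delta> \<gamma> M (z (Suc k))"
    and \<sigma>: "\<And>k. 0 < \<sigma> k" and \<gamma>: "0 < \<gamma>" "\<gamma> < 2" and \<delta>: "0 \<le> \<delta>" "\<delta> < 1" and \<alpha>: "0 < \<alpha>"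
    and subreg: "\<And>k. \<alpha> * distM M (resolventM T M (\<sigma> k) (z k)) (zeros T)
      \<le> normM M (z k - resolventM T M (\<sigma> k) (z k))"
  shows "normM M (z (Suc k) - z k)
    \<le> (1 + \<delta>) / ((1 - \<delta>) * (1 - sqrt (1 / (\<alpha>\<^sup>2 + 1)))) * igppa_rate \<gamma> \<delta> \<alpha> ^ k * normM M (z 1 - z 0)"
proof -
  define \<rho> where "\<rho> = igppa_rate \<gamma> \<delta> \<alpha>"
  define c where "c = 1 - sqrt (1 / (\<alpha>\<^sup>2 + 1))"
  have c: "0 < c" unfolding c_def using \<alpha> by (simp add: power2_add_1_pos)
  have \<rho>: "0 \<le> \<rho>" unfolding \<rho>_def using igppa_rate_nonneg[OF \<gamma> \<delta>] .
  have decay: "distM M (z k) (zeros T) \<le> \<rho> ^ k * distM M (z 0) (zeros T)"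
    using IGPPAstep_distM_contraction[OF steps[rule_format] \<sigma> \<gamma> \<delta> _ subreg] \<rho> \<alpha>
    unfolding \<rho>_def by (intro geometric_decay) auto
  have "(1 - \<delta>) * normM M (z (Suc k) - z k) \<le> \<gamma> * distM M (z k) (zeros T)"
    using IGPPAstep_normM_step_le_distM[OF steps[rule_format] \<sigma>] \<gamma> by simp
  also have "\<dots> \<le> \<rho> ^ k * (\<gamma> * distM M (z 0) (zeros T))"
    using decay \<gamma> by (simp add: mult_left_mono mult.left_commute)
  also have "\<dots> \<le> \<rho> ^ k * ((1 + \<delta>) * normM M (z 1 - z 0) / c)"
    using IGPPAstep_distM_le_normM_step[OF steps[rule_format] \<sigma> _ _ subreg, of 0] \<gamma> \<alpha> c \<rho>
    unfolding c_def by (intro mult_left_mono) (simp_all add: field_simps)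
  finally have "normM M (z (Suc k) - z k) * (1 - \<delta>) \<le> \<rho> ^ k * ((1 + \<delta>) * normM M (z 1 - z 0) / c)"
    by (simp add: mult.commute)
  then have "normM M (z (Suc k) - z k) \<le> \<rho> ^ k * ((1 + \<delta>) * normM M (z 1 - z 0) / c) / (1 - \<delta>)"
    using \<delta> by (subst pos_le_divide_eq) auto
  also have "\<dots> = (1 + \<delta>) / ((1 - \<delta>) * c) * \<rho> ^ k * normM M (z 1 - z 0)"
    by (simp add: ac_simps)
  finally show ?thesis unfolding \<rho>_def c_def .
qed

end

theorem corollary2:
  fixes T :: "'a::euclidean_space \<Rightarrow> 'a set" and M :: "'a \<Rightarrow> 'a"
    and z :: "nat \<Rightarrow> 'a" and \<sigma> \<eta> :: "nat \<Rightarrow> real"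
    and \<gamma> \<delta> r \<kappa> \<alpha> :: real and zbar0 :: 'a
  assumes T: "maximal_monotone T" and Omega: "zeros T \<noteq> {}"
    and M: "self_adjoint_pd M" and Mmax: "lambda_max M = 1"
    and gamma: "0 < \<gamma>" "\<gamma> < 2"
    and delta: "0 \<le> \<delta>" "\<delta> < 1/2"
    and sigma_nn: "\<forall>k. 0 \<le> \<sigma> k" and eta_nn: "\<forall>k. 0 \<le> \<eta> k"
    and eta_sum: "summable \<eta>"
    and sigma_inf: "(INF k. \<sigma> k) > 0"
    and steps: "\<forall>k. IGPPAstep T (z k) (\<sigma> k) (\<eta> k) \<delta> \<gamma> M (z (Suc k))"
    and bms: "bounded_metric_subregular T"
    and zbar0: "zbar0 \<in> zeros T" "\<forall>d \<in> zeros T. normM M (zbar0 - z 0) \<le> normM M (d - z 0)"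
    and r: "r \<ge> norm zbar0 + (1 / lambda_min M) * (distM M (z 0) (zeros T) + \<gamma> * (\<Sum>k. \<eta> k))"
    and kappa: "\<kappa> > 0"
    and kappa_r: "\<forall>x. norm x \<le> r \<longrightarrow> T x \<noteq> {} \<longrightarrow> infdist x (zeros T) \<le> \<kappa> * infdist 0 (T x)"
    and alpha: "\<alpha> > 0"
    and rho: "(1 / (1 - \<delta>)) * (sqrt (1 - min \<gamma> (2*\<gamma> - \<gamma>^2) * \<alpha>^2 / (\<alpha>^2 + 1))
               + \<delta> * (min \<gamma> 1 / sqrt (\<alpha>^2 + 1) + 1)) < 1"
    and sigma_ge: "\<forall>k. \<sigma> k \<ge> \<kappa> * \<alpha>"
  shows "\<forall>k. normM M (z (Suc k) - z k) \<le>
     ((1 + \<delta>) / ((1 - \<delta>) * (1 - sqrt (1 / (\<alpha>^2 + 1)))))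
     * ((1 / (1 - \<delta>)) * (sqrt (1 - min \<gamma> (2*\<gamma> - \<gamma>^2) * \<alpha>^2 / (\<alpha>^2 + 1))
               + \<delta> * (min \<gamma> 1 / sqrt (\<alpha>^2 + 1) + 1))) ^ k
     * normM M (z 1 - z 0)"
proof -
  interpret ppa_setting M T by unfold_locales (fact M T Omega Mmax)+
  have \<sigma>: "0 < \<sigma> k" for k using kappa alpha sigma_ge by (metis mult_pos_pos less_le_trans)
  have "norm (resolventM T M (\<sigma> k) (z k)) \<le> r" for k
    using IGPPA_resolvents_bounded[OF steps \<sigma> _ _ _ eta_sum zbar0 r] gamma eta_nn by auto
  then have "\<alpha> * distM M (resolventM T M (\<sigma> k) (z k)) (zeros T) \<le> normM M (z k - resolventM T M (\<sigma> k) (z k))" for k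
    using subregularity_at_resolventM[OF \<sigma> _ _ _ kappa_r] kappa alpha sigma_ge by auto
  then have "normM M (z (Suc k) - z k) \<le> (1 + \<delta>) / ((1 - \<delta>) * (1 - sqrt (1 / (\<alpha>\<^sup>2 + 1))))
      * igppa_rate \<gamma> \<delta> \<alpha> ^ k * normM M (z 1 - z 0)" for k
    using IGPPA_linear_convergence[OF steps \<sigma> gamma delta(1) _ alpha] delta(2) by simp
  then show ?thesis unfolding igppa_rate_def exact_rate_def by blast
qed

end
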